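(* Let $\langle \mathsf{E}, \mathsf{po}, \mathsf{mo}\rangle$ be a partial 1-Writer execution graph in which $\mathsf{mo}$ agrees with $\mathsf{po}$, and let $\mathsf{rf}_1,\mathsf{rf}_2$ be two reads-from relations over it. (1) If $\mathsf{rf}_1 \sqsubseteq \mathsf{rf}_2$ and $\mathsf{po}\cup\mathsf{rf}_1$ has a cycle, then $\mathsf{po}\cup\mathsf{rf}_2$ has a cycle. (2) If both $\mathsf{rf}_1$ and $\mathsf{rf}_2$ satisfy weak-read-coherence, then $\min(\mathsf{rf}_1,\mathsf{rf}_2)$ also satisfies weak-read-coherence.
   Context: Events are reads $\mathtt{r}(x,v)$ or writes $\mathtt{w}(x,v)$ on a variable $x$ with value $v$, each belonging to a thread; $\mathsf{po}$ (program order) is a strict partial order totally ordering the events of each thread and relating no events of different threads. The graph is 1-Writer: for every variable $x$ all writes to $x$ lie in a single thread. $\mathsf{mo}=\bigcup_x\mathsf{mo}_x$ with $\mathsf{mo}_x$ a strict total order on writes to $x$, and "agrees with $\mathsf{po}$" means $w\,\mathsf{mo}\,w'$ implies $w\,\mathsf{po}\,w'$. A reads-from relation $\mathsf{rf}$ maps every read $r$ to a unique write $\mathsf{rf}^{-1}(r)$ with the same variable and value. For reads-from relations, $\mathsf{rf}_1\sqsubseteq\mathsf{rf}_2$ iff for every read $r$, $\mathsf{rf}_1^{-1}(r)\,\mathsf{po}^*\,\mathsf{rf}_2^{-1}(r)$ (reflexive-transitive closure). $\min(\mathsf{rf}_1,\mathsf{rf}_2)$ is the reads-from relation mapping every read $r$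 to the $\mathsf{po}$-smaller of $\mathsf{rf}_1^{-1}(r)$ and $\mathsf{rf}_2^{-1}(r)$ (these lie in the same writer thread). $\mathsf{rf}$ satisfies weak-read-coherence if, with $\mathsf{hb}=(\mathsf{po}\cup\mathsf{rf})^+$, there is no read $r$ of a variable $x$ and writes $w,w'$ of $x$ with $w\,\mathsf{rf}\,r$, $w\,\mathsf{hb}\,w'$ and $w'\,\mathsf{hb}\,r$. *)

theory Defs
  imports Main
begin

datatype ('x, 'v) label = Rd (loc: 'x) (val: 'v) | Wr (loc: 'x) (val: 'v)

definition is_rd :: "('x,'v) label \<Rightarrow> bool" where
  "is_rd l = (case l of Rd _ _ \<Rightarrow> True | Wr _ _ \<Rightarrow> False)"

definition is_wr :: "('x,'v) label \<Rightarrow> bool" where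
  "is_wr l = (case l of Rd _ _ \<Rightarrow> False | Wr _ _ \<Rightarrow> True)"

definition reads :: "'e set \<Rightarrow> ('e \<Rightarrow> ('x,'v) label) \<Rightarrow> 'e set" where
  "reads E lab = {e \<in> E. is_rd (lab e)}"

definition writes :: "'e set \<Rightarrow> ('e \<Rightarrow> ('x,'v) label) \<Rightarrow> 'e set" where
  "writes E lab = {e \<in> E. is_wr (lab e)}"

definition writes_to :: "'e set \<Rightarrow> ('e \<Rightarrow> ('x,'v) label) \<Rightarrow> 'x \<Rightarrow> 'e set" where
  "writes_to E lab x = {e \<in> writes E lab. loc (lab e) = x}"

definition program_order ::
  "'e set \<Rightarrow> ('e \<Rightarrow> 't) \<Rightarrow> ('e \<times> 'e) set \<Rightarrow> bool" where
  "program_order E thr po \<longleftrightarrow>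
     po \<subseteq> E \<times> E \<and> irrefl po \<and> trans po \<and>
     (\<forall>a\<in>E. \<forall>b\<in>E. thr a = thr b \<and> a \<noteq> b \<longrightarrow> (a, b) \<in> po \<or> (b, a) \<in> po) \<and>
     (\<forall>a b. (a, b) \<in> po \<longrightarrow> thr a = thr b)"

definition one_writer ::
  "'e set \<Rightarrow> ('e \<Rightarrow> 't) \<Rightarrow> ('e \<Rightarrow> ('x,'v) label) \<Rightarrow> bool" where
  "one_writer E thr lab \<longleftrightarrow>
     (\<forall>x. \<forall>w\<in>writes_to E lab x. \<forall>w'\<in>writes_to E lab x. thr w = thr w')"

definition modification_order ::
  "'e set \<Rightarrow> ('e \<Rightarrow> ('x,'v) label) \<Rightarrow> ('e \<times> 'e) set \<Rightarrow> bool" where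
  "modification_order E lab mo \<longleftrightarrow>
     mo = (\<Union>x. mo \<inter> (writes_to E lab x \<times> writes_to E lab x)) \<and>
     (\<forall>x. let mx = mo \<inter> (writes_to E lab x \<times> writes_to E lab x) in
        irrefl mx \<and> trans mx \<and>
        (\<forall>a\<in>writes_to E lab x. \<forall>b\<in>writes_to E lab x. a \<noteq> b \<longrightarrow> (a, b) \<in> mx \<or> (b, a) \<in> mx))"

definition mo_agrees_po :: "('e \<times> 'e) set \<Rightarrow> ('e \<times> 'e) set \<Rightarrow> bool" where
  "mo_agrees_po mo po \<longleftrightarrow> mo \<subseteq> po"

definition one_writer_graph ::
  "'e set \<Rightarrow> ('e \<Rightarrow> 't) \<Rightarrow> ('e \<Rightarrow> ('x,'v) label) \<Rightarrow> ('e \<times> 'e) set \<Rightarrow> ('e \<times> 'e) set \<Rightarrow> bool" where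
  "one_writer_graph E thr lab po mo \<longleftrightarrow>
     program_order E thr po \<and> one_writer E thr lab \<and>
     modification_order E lab mo \<and> mo_agrees_po mo po"

definition reads_from ::
  "'e set \<Rightarrow> ('e \<Rightarrow> ('x,'v) label) \<Rightarrow> ('e \<times> 'e) set \<Rightarrow> bool" where
  "reads_from E lab rf \<longleftrightarrow>
     rf \<subseteq> writes E lab \<times> reads E lab \<and>
     (\<forall>r\<in>reads E lab. \<exists>!w. (w, r) \<in> rf) \<and>
     (\<forall>w r. (w, r) \<in> rf \<longrightarrow> loc (lab w) = loc (lab r) \<and> val (lab w) = val (lab r))"

definition rf_le ::
  "'e set \<Rightarrow> ('e \<Rightarrow> ('x,'v) label) \<Rightarrow> ('e \<times> 'e) set \<Rightarrow> ('e \<times> 'e) set \<Rightarrow> ('e \<times> 'e) set \<Rightarrow> bool" where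
  "rf_le E lab po rf1 rf2 \<longleftrightarrow>
     (\<forall>r\<in>reads E lab. \<forall>w1 w2. (w1, r) \<in> rf1 \<and> (w2, r) \<in> rf2 \<longrightarrow> (w1, w2) \<in> po\<^sup>*)"

definition rf_min ::
  "('e \<times> 'e) set \<Rightarrow> ('e \<times> 'e) set \<Rightarrow> ('e \<times> 'e) set \<Rightarrow> ('e \<times> 'e) set" where
  "rf_min po rf1 rf2 =
     {(w, r). \<exists>w1 w2. (w1, r) \<in> rf1 \<and> (w2, r) \<in> rf2 \<and>
        w = (if (w1, w2) \<in> po\<^sup>* then w1 else w2)}"

definition has_cycle :: "('e \<times> 'e) set \<Rightarrow> bool" where
  "has_cycle R \<longleftrightarrow> (\<exists>e. (e, e) \<in> R\<^sup>+)"

definition weak_read_coherent ::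
  "'e set \<Rightarrow> ('e \<Rightarrow> ('x,'v) label) \<Rightarrow> ('e \<times> 'e) set \<Rightarrow> ('e \<times> 'e) set \<Rightarrow> bool" where
  "weak_read_coherent E lab po rf \<longleftrightarrow>
     \<not> (\<exists>r\<in>reads E lab. \<exists>w\<in>writes_to E lab (loc (lab r)). \<exists>w'\<in>writes_to E lab (loc (lab r)).
          (w, r) \<in> rf \<and> (w, w') \<in> (po \<union> rf)\<^sup>+ \<and> (w', r) \<in> (po \<union> rf)\<^sup>+)"

end

theory Submission
  imports Defs
begin

text \<open>Both parts rest on one monotonicity fact: if every rf-edge w \<rightarrow> r factors as a
  po-path from w to some w' followed by an rf'-edge w' \<rightarrow> r, then (po \<union> rf)^+ \<subseteq> (po \<union> rf')^+.
  For (1), rf1 \<sqsubseteq> rf2 is exactly such a factorisation of rf1 through rf2. For (2), the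
  1-Writer condition makes the two sources of a read po-comparable, so min(rf1, rf2)
  factors through both rf1 and rf2; a coherence violation of the minimum uses an edge
  of rf1 or of rf2, together with happens-before paths that also exist for that relation.\<close>

lemma trancl_union_mono_relcomp:
  assumes "rf \<subseteq> po\<^sup>* O rf'"
  shows "(po \<union> rf)\<^sup>+ \<subseteq> (po \<union> rf')\<^sup>+"
proof -
  have "po\<^sup>* O rf' \<subseteq> (po \<union> rf')\<^sup>* O (po \<union> rf')"
    by (intro relcomp_mono rtrancl_mono) auto
  then have "po \<union> rf \<subseteq> (po \<union> rf')\<^sup>+"
    using assms by (auto simp: trancl_unfold_right)
  then have "(po \<union> rf)\<^sup>+ \<subseteq> ((po \<union> rf')\<^sup>+)\<^sup>+"
    by (rule trancl_mono_subset)
  then show ?thesis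
    by simp
qed

lemma has_cycle_union_mono_relcomp:
  assumes "rf \<subseteq> po\<^sup>* O rf'" and "has_cycle (po \<union> rf)"
  shows "has_cycle (po \<union> rf')"
  using assms trancl_union_mono_relcomp unfolding has_cycle_def by blast

lemma reads_from_source_writes_to:
  assumes "reads_from E lab rf" and "(w, r) \<in> rf"
  shows "w \<in> writes_to E lab (loc (lab r))"
  using assms unfolding reads_from_def writes_to_def by auto

lemma reads_from_target_reads:
  assumes "reads_from E lab rf" and "(w, r) \<in> rf"
  shows "r \<in> reads E lab"
  using assms unfolding reads_from_def by auto

lemma rf_le_imp_subset_relcomp:
  assumes "reads_from E lab rf1" and "reads_from E lab rf2"
    and "rf_le E lab po rf1 rf2"
  shows "rf1 \<subseteq> po\<^sup>* O rf2"
proof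
  fix p assume "p \<in> rf1"
  then obtain w1 r where p: "p = (w1, r)" and w1r: "(w1, r) \<in> rf1"
    by (cases p) auto
  have r: "r \<in> reads E lab"
    using assms(1) w1r by (rule reads_from_target_reads)
  then obtain w2 where w2r: "(w2, r) \<in> rf2"
    using assms(2) unfolding reads_from_def by blast
  have "(w1, w2) \<in> po\<^sup>*"
    using assms(3) r w1r w2r unfolding rf_le_def by blast
  with w2r show "p \<in> po\<^sup>* O rf2"
    unfolding p by blast
qed

lemma writes_to_po_comparable:
  assumes "program_order E thr po" and "one_writer E thr lab"
    and "w \<in> writes_to E lab x" and "w' \<in> writes_to E lab x"
  shows "(w, w') \<in> po\<^sup>* \<or> (w', w) \<in> po\<^sup>*"
proof -
  have "thr w = thr w'"
    using assms(2-4) unfolding one_writer_def by blast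
  moreover have "w \<in> E" and "w' \<in> E"
    using assms(3,4) unfolding writes_to_def writes_def by auto
  ultimately have "w = w' \<or> (w, w') \<in> po \<or> (w', w) \<in> po"
    using assms(1) unfolding program_order_def by blast
  then show ?thesis
    by auto
qed

lemma rf_min_subset_relcomp_right: "rf_min po rf1 rf2 \<subseteq> po\<^sup>* O rf2"
  unfolding rf_min_def by auto

lemma rf_min_subset_relcomp_left:
  assumes "\<And>w1 w2 r. (w1, r) \<in> rf1 \<Longrightarrow> (w2, r) \<in> rf2 \<Longrightarrow> (w1, w2) \<in> po\<^sup>* \<or> (w2, w1) \<in> po\<^sup>*"
  shows "rf_min po rf1 rf2 \<subseteq> po\<^sup>* O rf1"
  unfolding rf_min_def using assms by fastforce

lemma rf_min_subset_union: "rf_min po rf1 rf2 \<subseteq> rf1 \<union> rf2"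
  unfolding rf_min_def by auto

lemma weak_read_coherent_subset_union:
  assumes "weak_read_coherent E lab po rf1" and "weak_read_coherent E lab po rf2"
    and "rf \<subseteq> rf1 \<union> rf2" and "rf \<subseteq> po\<^sup>* O rf1" and "rf \<subseteq> po\<^sup>* O rf2"
  shows "weak_read_coherent E lab po rf"
  unfolding weak_read_coherent_def
proof (intro notI, elim bexE conjE)
  fix r w w'
  assume r: "r \<in> reads E lab"
    and w: "w \<in> writes_to E lab (loc (lab r))" and w': "w' \<in> writes_to E lab (loc (lab r))"
    and wr: "(w, r) \<in> rf" and ww': "(w, w') \<in> (po \<union> rf)\<^sup>+" and w'r: "(w', r) \<in> (po \<union> rf)\<^sup>+"
  have "(w, r) \<in> rf1 \<or> (w, r) \<in> rf2"
    using assms(3) wr by blast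
  then show False
  proof
    assume "(w, r) \<in> rf1"
    moreover have "(po \<union> rf)\<^sup>+ \<subseteq> (po \<union> rf1)\<^sup>+"
      using assms(4) by (rule trancl_union_mono_relcomp)
    ultimately show False
      using assms(1) r w w' ww' w'r unfolding weak_read_coherent_def by blast
  next
    assume "(w, r) \<in> rf2"
    moreover have "(po \<union> rf)\<^sup>+ \<subseteq> (po \<union> rf2)\<^sup>+"
      using assms(5) by (rule trancl_union_mono_relcomp)
    ultimately show False
      using assms(2) r w w' ww' w'r unfolding weak_read_coherent_def by blast
  qed
qed

theorem lemma3:
  fixes E :: "'e set" and thr :: "'e \<Rightarrow> 't" and lab :: "'e \<Rightarrow> ('x,'v) label"
    and po mo rf1 rf2 :: "('e \<times> 'e) set"
  assumes "one_writer_graph E thr lab po mo"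
    and "reads_from E lab rf1" and "reads_from E lab rf2"
  shows "(rf_le E lab po rf1 rf2 \<and> has_cycle (po \<union> rf1) \<longrightarrow> has_cycle (po \<union> rf2))
     \<and> (weak_read_coherent E lab po rf1 \<and> weak_read_coherent E lab po rf2
          \<longrightarrow> weak_read_coherent E lab po (rf_min po rf1 rf2))"
proof (intro conjI impI)
  assume "rf_le E lab po rf1 rf2 \<and> has_cycle (po \<union> rf1)"
  then show "has_cycle (po \<union> rf2)"
    using has_cycle_union_mono_relcomp rf_le_imp_subset_relcomp[OF assms(2,3)] by blast
next
  assume "weak_read_coherent E lab po rf1 \<and> weak_read_coherent E lab po rf2"
  then have coherent1: "weak_read_coherent E lab po rf1"
    and coherent2: "weak_read_coherent E lab po rf2"
    by simp_all
  have po: "program_order E thr po" and ow: "one_writer E thr lab"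
    using assms(1) unfolding one_writer_graph_def by auto
  have "(w1, w2) \<in> po\<^sup>* \<or> (w2, w1) \<in> po\<^sup>*" if "(w1, r) \<in> rf1" and "(w2, r) \<in> rf2" for w1 w2 r
    using writes_to_po_comparable[OF po ow reads_from_source_writes_to[OF assms(2) that(1)]
        reads_from_source_writes_to[OF assms(3) that(2)]] .
  then have "rf_min po rf1 rf2 \<subseteq> po\<^sup>* O rf1"
    by (rule rf_min_subset_relcomp_left)
  then show "weak_read_coherent E lab po (rf_min po rf1 rf2)"
    by (rule weak_read_coherent_subset_union[OF coherent1 coherent2 rf_min_subset_union _
          rf_min_subset_relcomp_right])
qed

end
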